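(* Let $S$ be a finite $p$-group, $Q\le S$ a characteristic subgroup with $C_S(Q)=Z(Q)$, and $\mathcal{F}$ a saturated fusion system on $S$. Then restriction to $Q$ induces group isomorphisms $\mathrm{Aut}_{\mathcal{F}}(S)/\mathrm{Aut}_{Z(Q)}(S)\cong N_{\mathrm{Aut}_{\mathcal{F}}(Q)}(\mathrm{Aut}_S(Q))$ and $\mathrm{Aut}_{\mathcal{F}}(S)/\mathrm{Aut}_{Q}(S)\cong N_{\mathrm{Out}_{\mathcal{F}}(Q)}(\mathrm{Out}_S(Q))$.
   Context: For subgroups $X\le S$ and $P\le S$ with $X$ normalising $P$, $\mathrm{Aut}_X(P)$ denotes the group of automorphisms of $P$ induced by conjugation by elements of $X$; $\mathrm{Out}_{\mathcal{F}}(Q)=\mathrm{Aut}_{\mathcal{F}}(Q)/\mathrm{Inn}(Q)$ and $\mathrm{Out}_S(Q)$ is the image of $\mathrm{Aut}_S(Q)$ in it. *)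

theory Defs
  imports "HOL-Algebra.Algebra"
begin

text \<open>A fusion system is
represented by a function F giving, for each pair of subgroups P, Q of S, the set
Hom_F(P,Q) of morphisms P to Q.  Morphisms are functions extensional on their domain
(undefined outside P), as in HOL-Algebra's Bij / BijGroup.\<close>

definition conjm :: "'a monoid \<Rightarrow> 'a \<Rightarrow> 'a set \<Rightarrow> ('a \<Rightarrow> 'a)" where
  "conjm S g P = (\<lambda>x\<in>P. g \<otimes>\<^bsub>S\<^esub> x \<otimes>\<^bsub>S\<^esub> inv\<^bsub>S\<^esub> g)"

definition HomS :: "'a monoid \<Rightarrow> 'a set \<Rightarrow> 'a set \<Rightarrow> ('a \<Rightarrow> 'a) set" where
  "HomS S P Q = {conjm S g P | g. g \<in> carrier S \<and> (\<forall>x\<in>P. g \<otimes>\<^bsub>S\<^esub> x \<otimes>\<^bsub>S\<^esub> inv\<^bsub>S\<^esub> g \<in> Q)}"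

definition InjHom :: "'a monoid \<Rightarrow> 'a set \<Rightarrow> 'a set \<Rightarrow> ('a \<Rightarrow> 'a) set" where
  "InjHom S P Q = {\<phi>. \<phi> \<in> extensional P \<and> \<phi> \<in> hom (S\<lparr>carrier := P\<rparr>) (S\<lparr>carrier := Q\<rparr>)
                     \<and> inj_on \<phi> P}"

definition AutX :: "'a monoid \<Rightarrow> 'a set \<Rightarrow> 'a set \<Rightarrow> ('a \<Rightarrow> 'a) set" where
  "AutX S T P = {conjm S g P | g. g \<in> T}"

definition NS :: "'a monoid \<Rightarrow> 'a set \<Rightarrow> 'a set" where
  "NS S P = {g \<in> carrier S. (\<lambda>x. g \<otimes>\<^bsub>S\<^esub> x \<otimes>\<^bsub>S\<^esub> inv\<^bsub>S\<^esub> g) ` P = P}"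

definition CS :: "'a monoid \<Rightarrow> 'a set \<Rightarrow> 'a set" where
  "CS S P = {g \<in> carrier S. \<forall>x\<in>P. g \<otimes>\<^bsub>S\<^esub> x = x \<otimes>\<^bsub>S\<^esub> g}"

definition ZZ :: "'a monoid \<Rightarrow> 'a set \<Rightarrow> 'a set" where
  "ZZ S P = {z \<in> P. \<forall>x\<in>P. z \<otimes>\<^bsub>S\<^esub> x = x \<otimes>\<^bsub>S\<^esub> z}"

text \<open>Fusion system on S (Broto-Levi-Oliver / Aschbacher-Kessar-Oliver, Def. I.2.1): a category
whose objects are the subgroups of S, with Hom_S(P,Q) contained in Hom_F(P,Q) contained in Inj(P,Q),
closed under composition (identities are in Hom_S), and such that every morphism is the composite
of an F-isomorphism onto its image followed by an inclusion.\<close>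
definition fusion_system :: "'a monoid \<Rightarrow> ('a set \<Rightarrow> 'a set \<Rightarrow> ('a \<Rightarrow> 'a) set) \<Rightarrow> bool" where
  "fusion_system S F \<longleftrightarrow>
     (\<forall>P Q. (subgroup P S \<and> subgroup Q S \<longrightarrow> HomS S P Q \<subseteq> F P Q \<and> F P Q \<subseteq> InjHom S P Q)
          \<and> (\<not> (subgroup P S \<and> subgroup Q S) \<longrightarrow> F P Q = {}))
   \<and> (\<forall>P Q R \<phi> \<psi>. \<phi> \<in> F P Q \<longrightarrow> \<psi> \<in> F Q R \<longrightarrow> compose P \<psi> \<phi> \<in> F P R)
   \<and> (\<forall>P Q \<phi>. \<phi> \<in> F P Q \<longrightarrow> \<phi> \<in> F P (\<phi> ` P) \<and> restrict (inv_into P \<phi>) (\<phi> ` P) \<in> F (\<phi> ` P) P)"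

definition AutFgrp :: "('a set \<Rightarrow> 'a set \<Rightarrow> ('a \<Rightarrow> 'a) set) \<Rightarrow> 'a set \<Rightarrow> ('a \<Rightarrow> 'a) monoid" where
  "AutFgrp F P = (BijGroup P)\<lparr>carrier := F P P\<rparr>"

definition Fconj :: "'a monoid \<Rightarrow> ('a set \<Rightarrow> 'a set \<Rightarrow> ('a \<Rightarrow> 'a) set) \<Rightarrow> 'a set \<Rightarrow> 'a set set" where
  "Fconj S F P = {\<phi> ` P | \<phi>. \<phi> \<in> F P (carrier S)}"

definition fully_normalized :: "'a monoid \<Rightarrow> ('a set \<Rightarrow> 'a set \<Rightarrow> ('a \<Rightarrow> 'a) set) \<Rightarrow> 'a set \<Rightarrow> bool" where
  "fully_normalized S F P \<longleftrightarrow> subgroup P S \<and> (\<forall>P' \<in> Fconj S F P. card (NS S P') \<le> card (NS S P))"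

definition fully_centralized :: "'a monoid \<Rightarrow> ('a set \<Rightarrow> 'a set \<Rightarrow> ('a \<Rightarrow> 'a) set) \<Rightarrow> 'a set \<Rightarrow> bool" where
  "fully_centralized S F P \<longleftrightarrow> subgroup P S \<and> (\<forall>P' \<in> Fconj S F P. card (CS S P') \<le> card (CS S P))"

definition sylow_in :: "nat \<Rightarrow> 'c set \<Rightarrow> ('c, 'd) monoid_scheme \<Rightarrow> bool" where
  "sylow_in p H G \<longleftrightarrow> subgroup H G \<and> (\<exists>a. card H = p ^ a) \<and>
     (\<exists>m. card (carrier G) = card H * m \<and> \<not> p dvd m)"

text \<open>N_phi = {g in N_S(P) : phi c_g phi^-1 in Aut_S(phi(P))}.\<close>
definition Nphi :: "'a monoid \<Rightarrow> 'a set \<Rightarrow> ('a \<Rightarrow> 'a) \<Rightarrow> 'a set" where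
  "Nphi S P \<phi> = {g \<in> NS S P. \<exists>h \<in> NS S (\<phi> ` P). \<forall>y \<in> \<phi> ` P.
       \<phi> (g \<otimes>\<^bsub>S\<^esub> inv_into P \<phi> y \<otimes>\<^bsub>S\<^esub> inv\<^bsub>S\<^esub> g) = h \<otimes>\<^bsub>S\<^esub> y \<otimes>\<^bsub>S\<^esub> inv\<^bsub>S\<^esub> h}"

text \<open>Saturated fusion system (AKO Def. I.2.2): (I) every fully normalized P is fully
centralized and Aut_S(P) is Sylow in Aut_F(P); (II) every phi in Hom_F(P,S) with phi(P) fully
centralized extends to a morphism in Hom_F(N_phi,S).\<close>
definition saturated :: "nat \<Rightarrow> 'a monoid \<Rightarrow> ('a set \<Rightarrow> 'a set \<Rightarrow> ('a \<Rightarrow> 'a) set) \<Rightarrow> bool" where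
  "saturated p S F \<longleftrightarrow> fusion_system S F
   \<and> (\<forall>P. fully_normalized S F P \<longrightarrow>
          fully_centralized S F P \<and> sylow_in p (AutX S (NS S P) P) (AutFgrp F P))
   \<and> (\<forall>P \<phi>. \<phi> \<in> F P (carrier S) \<and> fully_centralized S F (\<phi> ` P) \<longrightarrow>
          (\<exists>\<psi> \<in> F (Nphi S P \<phi>) (carrier S). \<forall>x\<in>P. \<psi> x = \<phi> x))"

text \<open>Out_F(Q) = Aut_F(Q)/Inn(Q) and Out_S(Q) = image of Aut_S(Q) in Out_F(Q).\<close>
definition OutFgrp :: "'a monoid \<Rightarrow> ('a set \<Rightarrow> 'a set \<Rightarrow> ('a \<Rightarrow> 'a) set) \<Rightarrow> 'a set \<Rightarrow> ('a \<Rightarrow> 'a) set monoid" where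
  "OutFgrp S F Q = AutFgrp F Q Mod AutX S Q Q"

definition OutS :: "'a monoid \<Rightarrow> ('a set \<Rightarrow> 'a set \<Rightarrow> ('a \<Rightarrow> 'a) set) \<Rightarrow> 'a set \<Rightarrow> ('a \<Rightarrow> 'a) set set" where
  "OutS S F Q = (\<lambda>a. AutX S Q Q #>\<^bsub>AutFgrp F Q\<^esub> a) ` AutX S (carrier S) Q"

end

theory Submission
  imports Defs
begin

text \<open>Since Q is characteristic, restriction is a homomorphism from Aut_F(S) to Aut_F(Q), and
it lands in the normaliser of Aut_S(Q) because Aut_S(S) is normal in Aut_F(S). Conversely, if
\<beta> normalises Aut_S(Q) then N_\<beta> = S and Q is fully normalised, so the extension axiom
extends \<beta> to S. If \<alpha> is the identity on Q, then g^-1 \<alpha>(g) centralises Q and so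
lies in Z(Q); hence \<alpha>^k(g) = g (g^-1 \<alpha>(g))^k, so \<alpha> has p-power order and lies
in the normal Sylow p-subgroup Aut_S(S) of Aut_F(S), i.e. \<alpha> = c_s with s in C_S(Q) = Z(Q).
The second isomorphism follows by passing to the quotient by Inn(Q): the preimage of Inn(Q) under
restriction is Aut_Q(S), as it contains the kernel Aut_Z(Q)(S), and the normaliser of Aut_S(Q)
maps onto the normaliser of Out_S(Q) because Inn(Q) is contained in Aut_S(Q).\<close>

lemma mem_normalizer_iff:
  assumes "A \<subseteq> carrier G" "x \<in> carrier G"
  shows "x \<in> normalizer G A \<longleftrightarrow> (\<lambda>a. x \<otimes>\<^bsub>G\<^esub> a \<otimes>\<^bsub>G\<^esub> inv\<^bsub>G\<^esub> x) ` A = A"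
proof -
  have "x <#\<^bsub>G\<^esub> A #>\<^bsub>G\<^esub> inv\<^bsub>G\<^esub> x = (\<lambda>a. x \<otimes>\<^bsub>G\<^esub> a \<otimes>\<^bsub>G\<^esub> inv\<^bsub>G\<^esub> x) ` A"
    unfolding l_coset_def r_coset_def by blast
  with assms show ?thesis unfolding normalizer_def stabilizer_def by simp
qed

lemma (in group) conj_eq_iff_mult_eq:
  assumes "x \<in> carrier G" "a \<in> carrier G" "b \<in> carrier G"
  shows "x \<otimes> a \<otimes> inv x = b \<longleftrightarrow> x \<otimes> a = b \<otimes> x"
  using assms inv_solve_right[of b "x \<otimes> a" x] by auto

lemma (in group) conj_image_eq:
  assumes x: "x \<in> carrier G" and A: "A \<subseteq> carrier G"
    and closed: "\<And>a. a \<in> A \<Longrightarrow> x \<otimes> a \<otimes> inv x \<in> A"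
    and inv_closed: "\<And>a. a \<in> A \<Longrightarrow> inv x \<otimes> a \<otimes> x \<in> A"
  shows "(\<lambda>a. x \<otimes> a \<otimes> inv x) ` A = A"
proof
  show "(\<lambda>a. x \<otimes> a \<otimes> inv x) ` A \<subseteq> A" using closed by blast
  show "A \<subseteq> (\<lambda>a. x \<otimes> a \<otimes> inv x) ` A"
  proof
    fix a assume a: "a \<in> A"
    have "a = x \<otimes> (inv x \<otimes> a \<otimes> x) \<otimes> inv x"
      using x a A by (simp add: m_assoc subsetD) (simp add: m_assoc[symmetric] subsetD)
    with inv_closed[OF a] show "a \<in> (\<lambda>a. x \<otimes> a \<otimes> inv x) ` A" by blast
  qed
qed

lemma (in normal) normalizer_eq_carrier: "normalizer G H = carrier G"
proof
  show "normalizer G H \<subseteq> carrier G" unfolding normalizer_def stabilizer_def by auto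
  show "carrier G \<subseteq> normalizer G H"
    using mem_normalizer_iff[OF subset] conj_image_eq[OF _ subset] inv_op_closed1 inv_op_closed2
    by auto
qed

lemma group_hom_compose:
  "group_hom G H f \<Longrightarrow> group_hom H K g \<Longrightarrow> group_hom G K (g \<circ> f)"
  unfolding group_hom_def group_hom_axioms_def using hom_compose by blast

lemma (in group_hom) normalizer_image_subset:
  assumes A: "A \<subseteq> carrier G"
  shows "h ` normalizer G A \<subseteq> normalizer H (h ` A)"
proof
  fix y assume "y \<in> h ` normalizer G A"
  then obtain x where x: "x \<in> normalizer G A" "y = h x" by blast
  have xG: "x \<in> carrier G" using x(1) unfolding normalizer_def stabilizer_def by simp
  have "(\<lambda>b. h x \<otimes>\<^bsub>H\<^esub> b \<otimes>\<^bsub>H\<^esub> inv\<^bsub>H\<^esub> h x) ` h ` A = h ` (\<lambda>a. x \<otimes> a \<otimes> inv x) ` A"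
    unfolding image_image using A xG by (intro image_cong) auto
  also have "\<dots> = h ` A" using x(1) mem_normalizer_iff[OF A xG] by simp
  finally have "(\<lambda>b. h x \<otimes>\<^bsub>H\<^esub> b \<otimes>\<^bsub>H\<^esub> inv\<^bsub>H\<^esub> h x) ` h ` A = h ` A" .
  moreover have "h ` A \<subseteq> carrier H" using A by auto
  ultimately show "y \<in> normalizer H (h ` A)"
    using mem_normalizer_iff[of "h ` A" H "h x"] xG x(2) by simp
qed

lemma (in group_hom) mem_of_image_mem:
  assumes A: "subgroup A G" and ker: "kernel G H h \<subseteq> A"
    and x: "x \<in> carrier G" and hx: "h x \<in> h ` A"
  shows "x \<in> A"
proof -
  obtain a where a: "a \<in> A" "h x = h a" using hx by blast
  have aG: "a \<in> carrier G" using subgroup.mem_carrier[OF A a(1)] .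
  have "h (x \<otimes> inv a) = \<one>\<^bsub>H\<^esub>" using x aG a(2) by simp
  then have "x \<otimes> inv a \<in> kernel G H h" using x aG by (simp add: kernel_def)
  then have "x \<otimes> inv a \<otimes> a \<in> A" using ker a(1) subgroup.m_closed[OF A] by blast
  then show ?thesis using x aG by (simp add: G.m_assoc)
qed

lemma (in group_hom) normalizer_image_eq:
  assumes A: "subgroup A G" and ker: "kernel G H h \<subseteq> A" and onto: "h ` carrier G = carrier H"
  shows "normalizer H (h ` A) = h ` normalizer G A"
proof
  have AG: "A \<subseteq> carrier G" using subgroup.subset[OF A] .
  have hA: "h ` A \<subseteq> carrier H" using AG by auto
  show "h ` normalizer G A \<subseteq> normalizer H (h ` A)" by (rule normalizer_image_subset[OF AG])
  have conj_mem: "x \<otimes> a \<otimes> inv x \<in> A"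
    if x: "x \<in> carrier G" "h x \<in> normalizer H (h ` A)" and a: "a \<in> A" for x a
  proof -
    have "(\<lambda>b. h x \<otimes>\<^bsub>H\<^esub> b \<otimes>\<^bsub>H\<^esub> inv\<^bsub>H\<^esub> h x) ` h ` A = h ` A"
      using x mem_normalizer_iff[OF hA] by simp
    moreover have "h (x \<otimes> a \<otimes> inv x) = h x \<otimes>\<^bsub>H\<^esub> h a \<otimes>\<^bsub>H\<^esub> inv\<^bsub>H\<^esub> h x"
      using x a subsetD[OF AG a] by simp
    ultimately have "h (x \<otimes> a \<otimes> inv x) \<in> h ` A" using a by (metis image_eqI)
    moreover have "x \<otimes> a \<otimes> inv x \<in> carrier G" using x(1) subsetD[OF AG a] by simp
    ultimately show ?thesis using mem_of_image_mem[OF A ker] by simp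
  qed
  show "normalizer H (h ` A) \<subseteq> h ` normalizer G A"
  proof
    fix y assume y: "y \<in> normalizer H (h ` A)"
    have "y \<in> carrier H" using subgroup.subset[OF H.normalizer_imp_subgroup[OF hA]] y by blast
    then obtain x where x: "x \<in> carrier G" "y = h x" using onto by blast
    have hinv: "h (inv x) \<in> normalizer H (h ` A)"
      using subgroup.m_inv_closed[OF H.normalizer_imp_subgroup[OF hA] y] x by simp
    have "(\<lambda>a. x \<otimes> a \<otimes> inv x) ` A = A"
    proof (rule G.conj_image_eq[OF x(1) AG])
      fix a assume a: "a \<in> A"
      show "x \<otimes> a \<otimes> inv x \<in> A" using conj_mem[OF x(1) _ a] x(2) y by simp
      show "inv x \<otimes> a \<otimes> x \<in> A" using conj_mem[OF _ hinv a] x(1) by simp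
    qed
    then have "x \<in> normalizer G A" using mem_normalizer_iff[OF AG x(1)] by simp
    then show "y \<in> h ` normalizer G A" using x(2) by blast
  qed
qed

lemma (in group_hom) FactGroup_iso_image:
  "(\<lambda>C. the_elem (h ` C)) \<in> iso (G Mod (kernel G H h)) (H\<lparr>carrier := h ` carrier G\<rparr>)"
proof -
  have "group_hom G (H\<lparr>carrier := h ` carrier G\<rparr>) h"
    using H.subgroup_imp_group[OF img_is_subgroup]
    by (auto simp: group_hom_def group_hom_axioms_def hom_def G.is_group)
  moreover have "kernel G (H\<lparr>carrier := h ` carrier G\<rparr>) h = kernel G H h"
    by (simp add: kernel_def)
  ultimately show ?thesis using group_hom.FactGroup_iso_set by fastforce
qed

lemma (in normal) group_hom_r_coset_Mod: "group_hom G (G Mod H) (\<lambda>a. H #> a)"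
  by (simp add: group_hom_def group_hom_axioms_def is_group factorgroup_is_group r_coset_hom_Mod)

lemma (in normal) image_r_coset_Mod: "(\<lambda>a. H #> a) ` carrier G = carrier (G Mod H)"
  by (auto simp: FactGroup_def RCOSETS_def)

lemma (in normal) kernel_r_coset_Mod: "kernel G (G Mod H) (\<lambda>a. H #> a) = H"
proof (intro equalityI subsetI)
  fix x assume "x \<in> kernel G (G Mod H) (\<lambda>a. H #> a)"
  then show "x \<in> H" using coset_join1[OF _ _ subgroup_axioms] by (simp add: kernel_def FactGroup_def)
next
  fix x assume "x \<in> H"
  then show "x \<in> kernel G (G Mod H) (\<lambda>a. H #> a)"
    using coset_join2[OF _ subgroup_axioms] subset by (auto simp: kernel_def FactGroup_def)
qed

lemma (in group) mem_normal_if_pow_coprime_index: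
  assumes N: "N \<lhd> G" and fin: "finite (carrier G)" and index: "order G = card N * m"
    and x: "x \<in> carrier G" and pow: "x [^] k = \<one>" and cop: "coprime k m"
  shows "x \<in> N"
proof -
  interpret N: normal N G by (rule N)
  interpret M: group "G Mod N" by (rule N.factorgroup_is_group)
  interpret quot: group_hom G "G Mod N" "\<lambda>a. N #> a" by (rule N.group_hom_r_coset_Mod)
  have "card N > 0" using finite_subset[OF N.subset fin] N.one_closed card_gt_0_iff by blast
  then have order_Mod: "order (G Mod N) = m"
    using lagrange[OF N.subgroup_axioms] index by (simp add: order_def FactGroup_def)
  have Nx: "N #> x \<in> carrier (G Mod N)" using quot.hom_closed[OF x] .
  have "(N #> x) [^]\<^bsub>G Mod N\<^esub> k = \<one>\<^bsub>G Mod N\<^esub>" using quot.hom_nat_pow[OF x, of k] pow quot.hom_one by simp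
  then have "M.ord (N #> x) dvd k" using M.pow_eq_id[OF Nx] by simp
  moreover have "M.ord (N #> x) dvd m" using M.ord_dvd_group_order[OF Nx] order_Mod by simp
  ultimately have "M.ord (N #> x) = 1" using coprime_common_divisor[OF cop] by simp
  then have "N #> x = N" using M.ord_eq_1[OF Nx] by (simp add: FactGroup_def)
  then show ?thesis using coset_join1[OF _ x N.subgroup_axioms] by blast
qed

locale finite_fusion_system =
  fixes S :: "'a monoid" (structure) and F :: "'a set \<Rightarrow> 'a set \<Rightarrow> ('a \<Rightarrow> 'a) set"
  assumes group_S: "group S" and finite_carrier: "finite (carrier S)"
    and fusion: "fusion_system S F"

sublocale finite_fusion_system \<subseteq> group S by (rule group_S)

context finite_fusion_system
begin

lemma mor_subgroups:
  assumes "\<phi> \<in> F P Q" shows "subgroup P S" "subgroup Q S"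
  using assms fusion unfolding fusion_system_def by blast+

lemma mor_InjHom: "\<phi> \<in> F P Q \<Longrightarrow> \<phi> \<in> InjHom S P Q"
  using fusion mor_subgroups unfolding fusion_system_def by blast

lemma conjm_mor:
  assumes "subgroup P S" "subgroup Q S" "g \<in> carrier S"
    and "\<And>x. x \<in> P \<Longrightarrow> g \<otimes> x \<otimes> inv g \<in> Q"
  shows "conjm S g P \<in> F P Q"
proof -
  have "conjm S g P \<in> HomS S P Q" unfolding HomS_def using assms(3,4) by blast
  with assms(1,2) fusion show ?thesis unfolding fusion_system_def by blast
qed

lemma mor_compose: "\<phi> \<in> F P Q \<Longrightarrow> \<psi> \<in> F Q R \<Longrightarrow> compose P \<psi> \<phi> \<in> F P R"
  using fusion unfolding fusion_system_def by blast

lemma mor_onto_image: "\<phi> \<in> F P Q \<Longrightarrow> \<phi> \<in> F P (\<phi> ` P)"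
  using fusion unfolding fusion_system_def by blast

lemma mor_inverse: "\<phi> \<in> F P Q \<Longrightarrow> restrict (inv_into P \<phi>) (\<phi> ` P) \<in> F (\<phi> ` P) P"
  using fusion unfolding fusion_system_def by blast

lemma mor_extensional: "\<phi> \<in> F P Q \<Longrightarrow> \<phi> \<in> extensional P"
  using mor_InjHom unfolding InjHom_def by blast

lemma mor_inj_on: "\<phi> \<in> F P Q \<Longrightarrow> inj_on \<phi> P"
  using mor_InjHom unfolding InjHom_def by blast

lemma mor_group_hom: "\<phi> \<in> F P Q \<Longrightarrow> group_hom (S\<lparr>carrier := P\<rparr>) (S\<lparr>carrier := Q\<rparr>) \<phi>"
  using mor_InjHom mor_subgroups subgroup_imp_group
  by (simp add: group_hom_def group_hom_axioms_def InjHom_def)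

lemma mor_closed: "\<phi> \<in> F P Q \<Longrightarrow> x \<in> P \<Longrightarrow> \<phi> x \<in> Q"
  using hom_in_carrier[of \<phi> "S\<lparr>carrier := P\<rparr>" "S\<lparr>carrier := Q\<rparr>" x] mor_InjHom
  unfolding InjHom_def by simp

lemma mor_mult: "\<phi> \<in> F P Q \<Longrightarrow> x \<in> P \<Longrightarrow> y \<in> P \<Longrightarrow> \<phi> (x \<otimes> y) = \<phi> x \<otimes> \<phi> y"
  using hom_mult[of \<phi> "S\<lparr>carrier := P\<rparr>" "S\<lparr>carrier := Q\<rparr>" x y] mor_InjHom
  unfolding InjHom_def by simp

lemma mor_inv:
  assumes \<phi>: "\<phi> \<in> F P Q" and x: "x \<in> P"
  shows "\<phi> (inv x) = inv (\<phi> x)"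
proof -
  interpret \<phi>: group_hom "S\<lparr>carrier := P\<rparr>" "S\<lparr>carrier := Q\<rparr>" \<phi> by (rule mor_group_hom[OF \<phi>])
  show ?thesis
    using \<phi>.hom_inv[of x] x mor_closed[OF \<phi> x] mor_subgroups[OF \<phi>] by simp
qed

lemma aut_image:
  assumes \<phi>: "\<phi> \<in> F P P" shows "\<phi> ` P = P"
proof (rule endo_inj_surj)
  show "finite P" using finite_subset[OF subgroup.subset[OF mor_subgroups(1)[OF \<phi>]] finite_carrier] .
  show "\<phi> ` P \<subseteq> P" using mor_closed[OF \<phi>] by blast
  show "inj_on \<phi> P" using mor_inj_on[OF \<phi>] .
qed

lemma aut_Bij:
  assumes "\<phi> \<in> F P P" shows "\<phi> \<in> Bij P"
  using aut_image[OF assms] mor_inj_on[OF assms] mor_extensional[OF assms]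
  by (simp add: Bij_def bij_betw_def)

lemma finite_aut:
  assumes P: "subgroup P S" shows "finite (F P P)"
proof (rule finite_subset)
  show "F P P \<subseteq> P \<rightarrow>\<^sub>E P"
  proof
    fix \<phi> assume \<phi>: "\<phi> \<in> F P P"
    show "\<phi> \<in> P \<rightarrow>\<^sub>E P" using mor_closed[OF \<phi>] mor_extensional[OF \<phi>] by (simp add: PiE_iff)
  qed
  show "finite (P \<rightarrow>\<^sub>E P)"
    using finite_subset[OF subgroup.subset[OF P] finite_carrier] by (simp add: finite_PiE)
qed

lemma conjm_one: "subgroup P S \<Longrightarrow> conjm S \<one> P = (\<lambda>x\<in>P. x)"
  unfolding conjm_def by (rule restrict_ext) (simp add: subgroup.mem_carrier)

lemma inclusion_mor: "subgroup P S \<Longrightarrow> subgroup Q S \<Longrightarrow> P \<subseteq> Q \<Longrightarrow> (\<lambda>x\<in>P. x) \<in> F P Q"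
  using conjm_mor[of P Q \<one>] conjm_one by (auto simp: subgroup.mem_carrier)

lemma id_aut: "subgroup P S \<Longrightarrow> (\<lambda>x\<in>P. x) \<in> F P P"
  using inclusion_mor by blast

lemma mor_restrict:
  assumes \<phi>: "\<phi> \<in> F P R" and Q: "subgroup Q S" "Q \<subseteq> P"
  shows "restrict \<phi> Q \<in> F Q R"
proof -
  have "compose Q \<phi> (\<lambda>x\<in>Q. x) \<in> F Q R"
    using mor_compose[OF inclusion_mor[OF Q(1) mor_subgroups(1)[OF \<phi>] Q(2)] \<phi>] .
  moreover have "compose Q \<phi> (\<lambda>x\<in>Q. x) = restrict \<phi> Q"
    unfolding compose_def by (rule restrict_ext) simp
  ultimately show ?thesis by simp
qed

lemma mor_enlarge_codomain:
  assumes \<phi>: "\<phi> \<in> F P Q" and R: "subgroup R S" "Q \<subseteq> R"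
  shows "\<phi> \<in> F P R"
proof -
  have "compose P (\<lambda>x\<in>Q. x) \<phi> \<in> F P R"
    using mor_compose[OF \<phi> inclusion_mor[OF mor_subgroups(2)[OF \<phi>] R]] .
  moreover have "compose P (\<lambda>x\<in>Q. x) \<phi> = restrict \<phi> P"
    unfolding compose_def by (rule restrict_ext) (simp add: mor_closed[OF \<phi>])
  ultimately show ?thesis using extensional_restrict[OF mor_extensional[OF \<phi>]] by simp
qed

lemma inner_aut: "g \<in> carrier S \<Longrightarrow> conjm S g (carrier S) \<in> F (carrier S) (carrier S)"
  by (rule conjm_mor[OF subgroup_self subgroup_self]) simp_all

lemma aut_auto: "\<alpha> \<in> F (carrier S) (carrier S) \<Longrightarrow> \<alpha> \<in> auto S"
  unfolding auto_def using aut_Bij mor_closed mor_mult by (auto intro!: homI)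

lemma subgroup_aut_BijGroup:
  assumes P: "subgroup P S"
  shows "subgroup (F P P) (BijGroup P)"
proof (rule subgroup.intro)
  show "F P P \<subseteq> carrier (BijGroup P)"
    by (rule subsetI) (simp add: BijGroup_def aut_Bij)
  show "\<one>\<^bsub>BijGroup P\<^esub> \<in> F P P" using id_aut[OF P] by (simp add: BijGroup_def)
  fix \<alpha> \<beta> assume \<alpha>: "\<alpha> \<in> F P P" and \<beta>: "\<beta> \<in> F P P"
  show "\<alpha> \<otimes>\<^bsub>BijGroup P\<^esub> \<beta> \<in> F P P"
    using aut_Bij[OF \<alpha>] aut_Bij[OF \<beta>] mor_compose[OF \<beta> \<alpha>] by (simp add: BijGroup_def)
  show "inv\<^bsub>BijGroup P\<^esub> \<alpha> \<in> F P P"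
    using mor_inverse[OF \<alpha>] aut_image[OF \<alpha>] aut_Bij[OF \<alpha>] by (simp add: inv_BijGroup)
qed

lemma group_AutFgrp: "subgroup P S \<Longrightarrow> group (AutFgrp F P)"
  unfolding AutFgrp_def using group.subgroup_imp_group[OF group_BijGroup subgroup_aut_BijGroup] .

lemma carrier_AutFgrp [simp]: "carrier (AutFgrp F P) = F P P"
  by (simp add: AutFgrp_def)

lemma mult_AutFgrp: "\<alpha> \<in> F P P \<Longrightarrow> \<beta> \<in> F P P \<Longrightarrow> \<alpha> \<otimes>\<^bsub>AutFgrp F P\<^esub> \<beta> = compose P \<alpha> \<beta>"
  using aut_Bij by (simp add: AutFgrp_def BijGroup_def)

lemma one_AutFgrp: "\<one>\<^bsub>AutFgrp F P\<^esub> = (\<lambda>x\<in>P. x)"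
  by (simp add: AutFgrp_def BijGroup_def)

lemma conjm_compose:
  assumes "subgroup P S" "g \<in> carrier S" "h \<in> carrier S" "\<And>x. x \<in> P \<Longrightarrow> h \<otimes> x \<otimes> inv h \<in> P"
  shows "compose P (conjm S g P) (conjm S h P) = conjm S (g \<otimes> h) P"
  unfolding compose_def conjm_def
proof (rule restrict_ext)
  fix x assume x: "x \<in> P"
  show "(\<lambda>x\<in>P. g \<otimes> x \<otimes> inv g) ((\<lambda>x\<in>P. h \<otimes> x \<otimes> inv h) x) = g \<otimes> h \<otimes> x \<otimes> inv (g \<otimes> h)"
    using x assms(4)[OF x] subgroup.mem_carrier[OF assms(1) x] assms(2,3)
    by (simp add: inv_mult_group m_assoc)
qed

lemma AutX_eq_image: "AutX S T P = (\<lambda>g. conjm S g P) ` T"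
  unfolding AutX_def by blast

lemma subgroup_AutX:
  assumes T: "subgroup T S" and P: "subgroup P S"
    and normalizes: "\<And>g x. g \<in> T \<Longrightarrow> x \<in> P \<Longrightarrow> g \<otimes> x \<otimes> inv g \<in> P"
  shows "subgroup (AutX S T P) (AutFgrp F P)"
proof -
  have "(\<lambda>g. conjm S g P) \<in> hom (S\<lparr>carrier := T\<rparr>) (AutFgrp F P)"
  proof (rule homI)
    fix g h assume "g \<in> carrier (S\<lparr>carrier := T\<rparr>)" "h \<in> carrier (S\<lparr>carrier := T\<rparr>)"
    then have g: "g \<in> T" "g \<in> carrier S" and h: "h \<in> T" "h \<in> carrier S"
      using subgroup.mem_carrier[OF T] by auto
    show "conjm S g P \<in> carrier (AutFgrp F P)"
      using conjm_mor[OF P P g(2) normalizes[OF g(1)]] by simp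
    show "conjm S (g \<otimes>\<^bsub>S\<lparr>carrier := T\<rparr>\<^esub> h) P = conjm S g P \<otimes>\<^bsub>AutFgrp F P\<^esub> conjm S h P"
      using mult_AutFgrp conjm_mor[OF P P g(2) normalizes[OF g(1)]] conjm_mor[OF P P h(2) normalizes[OF h(1)]]
        conjm_compose[OF P g(2) h(2) normalizes[OF h(1)]] by simp
  qed
  then have "group_hom (S\<lparr>carrier := T\<rparr>) (AutFgrp F P) (\<lambda>g. conjm S g P)"
    using subgroup_imp_group[OF T] group_AutFgrp[OF P] by (simp add: group_hom_def group_hom_axioms_def)
  then show ?thesis unfolding AutX_eq_image using group_hom.img_is_subgroup by fastforce
qed

lemma aut_conj_conjm_iff:
  assumes P: "subgroup P S" and \<beta>: "\<beta> \<in> F P P"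
    and g: "conjm S g P \<in> F P P" and h: "conjm S h P \<in> F P P"
  shows "\<beta> \<otimes>\<^bsub>AutFgrp F P\<^esub> conjm S g P \<otimes>\<^bsub>AutFgrp F P\<^esub> inv\<^bsub>AutFgrp F P\<^esub> \<beta> = conjm S h P
    \<longleftrightarrow> (\<forall>y\<in>P. \<beta> (g \<otimes> y \<otimes> inv g) = h \<otimes> \<beta> y \<otimes> inv h)"
proof -
  interpret A: group "AutFgrp F P" by (rule group_AutFgrp[OF P])
  have "\<beta> \<otimes>\<^bsub>AutFgrp F P\<^esub> conjm S g P \<otimes>\<^bsub>AutFgrp F P\<^esub> inv\<^bsub>AutFgrp F P\<^esub> \<beta> = conjm S h P
      \<longleftrightarrow> compose P \<beta> (conjm S g P) = compose P (conjm S h P) \<beta>"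
    using A.conj_eq_iff_mult_eq[of \<beta> "conjm S g P" "conjm S h P"] \<beta> g h by (simp add: mult_AutFgrp)
  also have "\<dots> \<longleftrightarrow> (\<forall>y\<in>P. \<beta> (conjm S g P y) = conjm S h P (\<beta> y))"
  proof
    assume eq: "compose P \<beta> (conjm S g P) = compose P (conjm S h P) \<beta>"
    show "\<forall>y\<in>P. \<beta> (conjm S g P y) = conjm S h P (\<beta> y)"
    proof
      fix y assume "y \<in> P"
      with fun_cong[OF eq, of y] show "\<beta> (conjm S g P y) = conjm S h P (\<beta> y)"
        by (simp add: compose_eq)
    qed
  next
    assume "\<forall>y\<in>P. \<beta> (conjm S g P y) = conjm S h P (\<beta> y)"
    then show "compose P \<beta> (conjm S g P) = compose P (conjm S h P) \<beta>"
      unfolding compose_def by (intro restrict_ext) simp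
  qed
  also have "\<dots> \<longleftrightarrow> (\<forall>y\<in>P. \<beta> (g \<otimes> y \<otimes> inv g) = h \<otimes> \<beta> y \<otimes> inv h)"
    using mor_closed[OF \<beta>] by (simp add: conjm_def)
  finally show ?thesis .
qed

lemma aut_conj_conjm:
  assumes P: "subgroup P S" and \<beta>: "\<beta> \<in> F P P" and q: "q \<in> P"
  shows "\<beta> \<otimes>\<^bsub>AutFgrp F P\<^esub> conjm S q P \<otimes>\<^bsub>AutFgrp F P\<^esub> inv\<^bsub>AutFgrp F P\<^esub> \<beta> = conjm S (\<beta> q) P"
proof -
  have closed: "\<And>g x. g \<in> P \<Longrightarrow> x \<in> P \<Longrightarrow> g \<otimes> x \<otimes> inv g \<in> P"
    using P by (simp add: subgroup.m_closed subgroup.m_inv_closed)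
  have \<beta>q: "\<beta> q \<in> P" using mor_closed[OF \<beta> q] .
  have "\<beta> (q \<otimes> y \<otimes> inv q) = \<beta> q \<otimes> \<beta> y \<otimes> inv (\<beta> q)" if y: "y \<in> P" for y
    using mor_mult[OF \<beta>] mor_inv[OF \<beta> q] q y P by (simp add: subgroup.m_closed subgroup.m_inv_closed)
  moreover have "conjm S q P \<in> F P P" "conjm S (\<beta> q) P \<in> F P P"
    using conjm_mor[OF P P subgroup.mem_carrier[OF P q] closed[OF q]]
      conjm_mor[OF P P subgroup.mem_carrier[OF P \<beta>q] closed[OF \<beta>q]] by auto
  ultimately show ?thesis using aut_conj_conjm_iff[OF P \<beta>] by simp
qed

lemma normal_Inn:
  assumes P: "subgroup P S"
  shows "AutX S P P \<lhd> AutFgrp F P"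
  unfolding group.normal_inv_iff[OF group_AutFgrp[OF P]]
proof (intro conjI ballI)
  show "subgroup (AutX S P P) (AutFgrp F P)"
    using subgroup_AutX[OF P P] P by (simp add: subgroup.m_closed subgroup.m_inv_closed)
  fix \<beta> c assume \<beta>: "\<beta> \<in> carrier (AutFgrp F P)" and c: "c \<in> AutX S P P"
  then obtain q where q: "q \<in> P" "c = conjm S q P" unfolding AutX_def by blast
  then show "\<beta> \<otimes>\<^bsub>AutFgrp F P\<^esub> c \<otimes>\<^bsub>AutFgrp F P\<^esub> inv\<^bsub>AutFgrp F P\<^esub> \<beta> \<in> AutX S P P"
    using aut_conj_conjm[OF P _ q(1)] mor_closed[of \<beta> P P q] \<beta> unfolding AutX_def by auto
qed

lemma NS_carrier: "NS S (carrier S) = carrier S"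
  unfolding NS_def using conj_image_eq[of _ "carrier S"] by auto

lemma fully_normalized_if_NS_eq_carrier:
  assumes "subgroup P S" "NS S P = carrier S"
  shows "fully_normalized S F P"
proof -
  have "card (NS S P') \<le> card (carrier S)" for P'
    unfolding NS_def by (rule card_mono[OF finite_carrier]) blast
  then show ?thesis unfolding fully_normalized_def using assms by simp
qed

end

locale saturated_fusion_system = finite_fusion_system +
  fixes p :: nat
  assumes prime_p: "Factorial_Ring.prime p" and p_group: "\<exists>n. card (carrier S) = p ^ n"
    and saturated: "saturated p S F"
begin

lemma fully_centralized_if_fully_normalized:
  "fully_normalized S F P \<Longrightarrow> fully_centralized S F P"
  using saturated unfolding saturated_def by blast

lemma sylow_if_fully_normalized:
  "fully_normalized S F P \<Longrightarrow> sylow_in p (AutX S (NS S P) P) (AutFgrp F P)"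
  using saturated unfolding saturated_def by blast

lemma extension_axiom:
  "\<phi> \<in> F P (carrier S) \<Longrightarrow> fully_centralized S F (\<phi> ` P)
    \<Longrightarrow> \<exists>\<psi> \<in> F (Nphi S P \<phi>) (carrier S). \<forall>x\<in>P. \<psi> x = \<phi> x"
  using saturated unfolding saturated_def by blast

lemma aut_of_p_power_order_inner:
  assumes \<alpha>: "\<alpha> \<in> F (carrier S) (carrier S)"
    and pow: "\<alpha> [^]\<^bsub>AutFgrp F (carrier S)\<^esub> (p ^ k) = \<one>\<^bsub>AutFgrp F (carrier S)\<^esub>"
  shows "\<alpha> \<in> AutX S (carrier S) (carrier S)"
proof -
  interpret A: group "AutFgrp F (carrier S)" by (rule group_AutFgrp[OF subgroup_self])
  have "fully_normalized S F (carrier S)"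
    using fully_normalized_if_NS_eq_carrier[OF subgroup_self NS_carrier] .
  then have "sylow_in p (AutX S (carrier S) (carrier S)) (AutFgrp F (carrier S))"
    using sylow_if_fully_normalized[of "carrier S"] by (simp only: NS_carrier)
  then obtain m where m: "card (F (carrier S) (carrier S)) = card (AutX S (carrier S) (carrier S)) * m"
    "\<not> p dvd m"
    unfolding sylow_in_def by auto
  have cop: "coprime (p ^ k) m" using prime_imp_coprime[OF prime_p m(2)] by simp
  show ?thesis
  proof (rule A.mem_normal_if_pow_coprime_index[OF normal_Inn[OF subgroup_self] _ _ _ pow cop])
    show "finite (carrier (AutFgrp F (carrier S)))" using finite_aut[OF subgroup_self] by simp
    show "order (AutFgrp F (carrier S)) = card (AutX S (carrier S) (carrier S)) * m"
      using m(1) by (simp add: order_def)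
    show "\<alpha> \<in> carrier (AutFgrp F (carrier S))" using \<alpha> by simp
  qed
qed

end

locale char_self_centralizing = saturated_fusion_system +
  fixes Q :: "'a set"
  assumes subgroup_Q: "subgroup Q S" and characteristic: "\<forall>\<alpha> \<in> auto S. \<alpha> ` Q = Q"
    and self_centralizing: "CS S Q = ZZ S Q"
begin

lemma Q_carrier: "x \<in> Q \<Longrightarrow> x \<in> carrier S"
  using subgroup.mem_carrier[OF subgroup_Q] .

lemma aut_image_Q: "\<alpha> \<in> F (carrier S) (carrier S) \<Longrightarrow> \<alpha> ` Q = Q"
  using characteristic aut_auto by blast

lemma conj_closed_Q:
  assumes g: "g \<in> carrier S" and x: "x \<in> Q"
  shows "g \<otimes> x \<otimes> inv g \<in> Q"
proof -
  have "conjm S g (carrier S) x \<in> Q" using aut_image_Q[OF inner_aut[OF g]] x by blast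
  then show ?thesis unfolding conjm_def using Q_carrier[OF x] by simp
qed

lemma conjm_Q_aut: "g \<in> carrier S \<Longrightarrow> conjm S g Q \<in> F Q Q"
  by (rule conjm_mor[OF subgroup_Q subgroup_Q]) (simp_all add: conj_closed_Q)

lemma NS_Q: "NS S Q = carrier S"
proof -
  have "(\<lambda>x. g \<otimes> x \<otimes> inv g) ` Q = Q" if g: "g \<in> carrier S" for g
  proof (rule conj_image_eq[OF g subgroup.subset[OF subgroup_Q]])
    fix a assume a: "a \<in> Q"
    show "g \<otimes> a \<otimes> inv g \<in> Q" using conj_closed_Q[OF g a] .
    show "inv g \<otimes> a \<otimes> g \<in> Q" using conj_closed_Q[OF inv_closed[OF g] a] g by simp
  qed
  then show ?thesis unfolding NS_def by auto
qed

lemma fully_centralized_Q: "fully_centralized S F Q"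
  using fully_centralized_if_fully_normalized fully_normalized_if_NS_eq_carrier[OF subgroup_Q NS_Q] .

lemma restrict_aut: "\<alpha> \<in> F (carrier S) (carrier S) \<Longrightarrow> restrict \<alpha> Q \<in> F Q Q"
  using mor_onto_image[OF mor_restrict[OF _ subgroup_Q subgroup.subset[OF subgroup_Q]]] aut_image_Q
  by fastforce

lemma restrict_conjm: "g \<in> carrier S \<Longrightarrow> restrict (conjm S g (carrier S)) Q = conjm S g Q"
  unfolding conjm_def by (rule restrict_ext) (simp add: Q_carrier)

lemma restrict_AutX:
  assumes "T \<subseteq> carrier S" shows "(\<lambda>\<alpha>. restrict \<alpha> Q) ` AutX S T (carrier S) = AutX S T Q"
  unfolding AutX_eq_image image_image
  by (rule image_cong[OF refl]) (use assms in \<open>simp add: restrict_conjm subset_iff\<close>)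

lemma subgroup_AutS_Q: "subgroup (AutX S (carrier S) Q) (AutFgrp F Q)"
  using subgroup_AutX[OF subgroup_self subgroup_Q] conj_closed_Q by blast

lemma group_hom_restrict: "group_hom (AutFgrp F (carrier S)) (AutFgrp F Q) (\<lambda>\<alpha>. restrict \<alpha> Q)"
proof -
  have "(\<lambda>\<alpha>. restrict \<alpha> Q) \<in> hom (AutFgrp F (carrier S)) (AutFgrp F Q)"
  proof (rule homI)
    fix \<alpha> \<beta> assume "\<alpha> \<in> carrier (AutFgrp F (carrier S))" "\<beta> \<in> carrier (AutFgrp F (carrier S))"
    then have \<alpha>: "\<alpha> \<in> F (carrier S) (carrier S)" and \<beta>: "\<beta> \<in> F (carrier S) (carrier S)" by auto
    show "restrict \<alpha> Q \<in> carrier (AutFgrp F Q)" using restrict_aut[OF \<alpha>] by simp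
    have "restrict (compose (carrier S) \<alpha> \<beta>) Q = compose Q (restrict \<alpha> Q) (restrict \<beta> Q)"
      unfolding compose_def by (rule restrict_ext) (use aut_image_Q[OF \<beta>] Q_carrier in auto)
    then show "restrict (\<alpha> \<otimes>\<^bsub>AutFgrp F (carrier S)\<^esub> \<beta>) Q
        = restrict \<alpha> Q \<otimes>\<^bsub>AutFgrp F Q\<^esub> restrict \<beta> Q"
      using mult_AutFgrp \<alpha> \<beta> restrict_aut by simp
  qed
  then show ?thesis
    using group_AutFgrp[OF subgroup_self] group_AutFgrp[OF subgroup_Q]
    by (simp add: group_hom_def group_hom_axioms_def)
qed

lemma restrict_mem_normalizer:
  assumes \<alpha>: "\<alpha> \<in> F (carrier S) (carrier S)"
  shows "restrict \<alpha> Q \<in> normalizer (AutFgrp F Q) (AutX S (carrier S) Q)"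
proof -
  interpret \<rho>: group_hom "AutFgrp F (carrier S)" "AutFgrp F Q" "\<lambda>\<alpha>. restrict \<alpha> Q"
    by (rule group_hom_restrict)
  interpret Inn: normal "AutX S (carrier S) (carrier S)" "AutFgrp F (carrier S)"
    by (rule normal_Inn[OF subgroup_self])
  have "\<alpha> \<in> normalizer (AutFgrp F (carrier S)) (AutX S (carrier S) (carrier S))"
    using \<alpha> Inn.normalizer_eq_carrier by simp
  then have "restrict \<alpha> Q \<in> normalizer (AutFgrp F Q) ((\<lambda>\<alpha>. restrict \<alpha> Q) ` AutX S (carrier S) (carrier S))"
    by (rule subsetD[OF \<rho>.normalizer_image_subset[OF Inn.subset] imageI])
  then show ?thesis using restrict_AutX[OF subset_refl] by simp
qed

lemma normalizer_AutS_twisted: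
  assumes \<beta>: "\<beta> \<in> normalizer (AutFgrp F Q) (AutX S (carrier S) Q)" and g: "g \<in> carrier S"
  shows "\<exists>h \<in> carrier S. \<forall>y \<in> Q. \<beta> (g \<otimes> y \<otimes> inv g) = h \<otimes> \<beta> y \<otimes> inv h"
proof -
  have \<beta>F: "\<beta> \<in> F Q Q" using \<beta> unfolding normalizer_def stabilizer_def by simp
  have "(\<lambda>c. \<beta> \<otimes>\<^bsub>AutFgrp F Q\<^esub> c \<otimes>\<^bsub>AutFgrp F Q\<^esub> inv\<^bsub>AutFgrp F Q\<^esub> \<beta>) ` AutX S (carrier S) Q
      = AutX S (carrier S) Q"
    using \<beta> \<beta>F mem_normalizer_iff[OF subgroup.subset[OF subgroup_AutS_Q]] by simp
  moreover have "conjm S g Q \<in> AutX S (carrier S) Q" unfolding AutX_def using g by blast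
  ultimately have "\<beta> \<otimes>\<^bsub>AutFgrp F Q\<^esub> conjm S g Q \<otimes>\<^bsub>AutFgrp F Q\<^esub> inv\<^bsub>AutFgrp F Q\<^esub> \<beta>
      \<in> AutX S (carrier S) Q"
    by (metis imageI)
  then obtain h where h: "h \<in> carrier S"
    "\<beta> \<otimes>\<^bsub>AutFgrp F Q\<^esub> conjm S g Q \<otimes>\<^bsub>AutFgrp F Q\<^esub> inv\<^bsub>AutFgrp F Q\<^esub> \<beta> = conjm S h Q"
    unfolding AutX_def by blast
  then have "\<forall>y\<in>Q. \<beta> (g \<otimes> y \<otimes> inv g) = h \<otimes> \<beta> y \<otimes> inv h"
    using aut_conj_conjm_iff[OF subgroup_Q \<beta>F conjm_Q_aut[OF g] conjm_Q_aut[OF h(1)]] by simp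
  then show ?thesis using h(1) by blast
qed

lemma Nphi_eq_carrier:
  assumes \<beta>: "\<beta> \<in> F Q Q"
    and twisted: "\<And>g. g \<in> carrier S \<Longrightarrow> \<exists>h \<in> carrier S. \<forall>y \<in> Q. \<beta> (g \<otimes> y \<otimes> inv g) = h \<otimes> \<beta> y \<otimes> inv h"
  shows "Nphi S Q \<beta> = carrier S"
proof
  show "Nphi S Q \<beta> \<subseteq> carrier S" unfolding Nphi_def NS_def by blast
  show "carrier S \<subseteq> Nphi S Q \<beta>"
  proof
    fix g assume g: "g \<in> carrier S"
    obtain h where h: "h \<in> carrier S" "\<And>y. y \<in> Q \<Longrightarrow> \<beta> (g \<otimes> y \<otimes> inv g) = h \<otimes> \<beta> y \<otimes> inv h"
      using twisted[OF g] by blast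
    have "\<beta> (g \<otimes> inv_into Q \<beta> y \<otimes> inv g) = h \<otimes> y \<otimes> inv h" if y: "y \<in> \<beta> ` Q" for y
      using h(2)[OF inv_into_into[OF y]] f_inv_into_f[OF y] by simp
    then show "g \<in> Nphi S Q \<beta>"
      unfolding Nphi_def using g h(1) NS_Q aut_image[OF \<beta>] by auto
  qed
qed

lemma extend_to_S:
  assumes \<beta>: "\<beta> \<in> F Q Q"
    and twisted: "\<And>g. g \<in> carrier S \<Longrightarrow> \<exists>h \<in> carrier S. \<forall>y \<in> Q. \<beta> (g \<otimes> y \<otimes> inv g) = h \<otimes> \<beta> y \<otimes> inv h"
  shows "\<exists>\<alpha> \<in> F (carrier S) (carrier S). restrict \<alpha> Q = \<beta>"
proof -
  have "\<beta> \<in> F Q (carrier S)"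
    using mor_enlarge_codomain[OF \<beta> subgroup_self subgroup.subset[OF subgroup_Q]] .
  moreover have "fully_centralized S F (\<beta> ` Q)" using fully_centralized_Q aut_image[OF \<beta>] by simp
  ultimately obtain \<psi> where \<psi>: "\<psi> \<in> F (Nphi S Q \<beta>) (carrier S)" "\<forall>x\<in>Q. \<psi> x = \<beta> x"
    using extension_axiom by blast
  have "restrict \<psi> Q = restrict \<beta> Q" using \<psi>(2) by (intro restrict_ext) blast
  also have "\<dots> = \<beta>" using extensional_restrict[OF mor_extensional[OF \<beta>]] .
  finally show ?thesis using \<psi>(1) Nphi_eq_carrier[OF \<beta> twisted] by auto
qed

lemma image_restrict:
  "(\<lambda>\<alpha>. restrict \<alpha> Q) ` F (carrier S) (carrier S) = normalizer (AutFgrp F Q) (AutX S (carrier S) Q)"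
proof
  show "(\<lambda>\<alpha>. restrict \<alpha> Q) ` F (carrier S) (carrier S) \<subseteq> normalizer (AutFgrp F Q) (AutX S (carrier S) Q)"
    using restrict_mem_normalizer by blast
  show "normalizer (AutFgrp F Q) (AutX S (carrier S) Q) \<subseteq> (\<lambda>\<alpha>. restrict \<alpha> Q) ` F (carrier S) (carrier S)"
  proof
    fix \<beta> assume \<beta>: "\<beta> \<in> normalizer (AutFgrp F Q) (AutX S (carrier S) Q)"
    then have "\<beta> \<in> F Q Q" unfolding normalizer_def stabilizer_def by simp
    then obtain \<alpha> where "\<alpha> \<in> F (carrier S) (carrier S)" "restrict \<alpha> Q = \<beta>"
      using extend_to_S normalizer_AutS_twisted[OF \<beta>] by blast
    then show "\<beta> \<in> (\<lambda>\<alpha>. restrict \<alpha> Q) ` F (carrier S) (carrier S)" by blast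
  qed
qed

lemma inv_mult_image_mem_Q:
  assumes \<alpha>: "\<alpha> \<in> F (carrier S) (carrier S)" and fixes_Q: "\<And>x. x \<in> Q \<Longrightarrow> \<alpha> x = x"
    and g: "g \<in> carrier S"
  shows "inv g \<otimes> \<alpha> g \<in> Q"
proof -
  have \<alpha>g: "\<alpha> g \<in> carrier S" using mor_closed[OF \<alpha> g] .
  have "inv g \<otimes> \<alpha> g \<in> CS S Q" unfolding CS_def
  proof (intro CollectI conjI ballI)
    show "inv g \<otimes> \<alpha> g \<in> carrier S" using g \<alpha>g by simp
    fix x assume x: "x \<in> Q"
    have xS: "x \<in> carrier S" using Q_carrier[OF x] .
    have "\<alpha> g \<otimes> x \<otimes> inv (\<alpha> g) = \<alpha> (g \<otimes> x \<otimes> inv g)"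
      using mor_mult[OF \<alpha>] mor_inv[OF \<alpha> g] fixes_Q[OF x] g xS by simp
    also have "\<dots> = g \<otimes> x \<otimes> inv g" using fixes_Q[OF conj_closed_Q[OF g x]] .
    finally have "\<alpha> g \<otimes> x = g \<otimes> x \<otimes> inv g \<otimes> \<alpha> g"
      using conj_eq_iff_mult_eq \<alpha>g xS g by simp
    then have "inv g \<otimes> (\<alpha> g \<otimes> x) = inv g \<otimes> (g \<otimes> x \<otimes> inv g \<otimes> \<alpha> g)" by simp
    then show "inv g \<otimes> \<alpha> g \<otimes> x = x \<otimes> (inv g \<otimes> \<alpha> g)"
      using g \<alpha>g xS by (simp add: m_assoc[symmetric])
  qed
  then show ?thesis using self_centralizing unfolding ZZ_def by blast
qed

lemma aut_fixing_Q_pow: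
  fixes k :: nat
  assumes \<alpha>: "\<alpha> \<in> F (carrier S) (carrier S)" and fixes_Q: "\<And>x. x \<in> Q \<Longrightarrow> \<alpha> x = x"
    and g: "g \<in> carrier S"
  shows "(\<alpha> [^]\<^bsub>AutFgrp F (carrier S)\<^esub> k) g = g \<otimes> (inv g \<otimes> \<alpha> g) [^] k"
proof (induction k)
  case 0
  show ?case using g by (simp add: one_AutFgrp)
next
  case (Suc k)
  interpret A: group "AutFgrp F (carrier S)" by (rule group_AutFgrp[OF subgroup_self])
  define z where "z = inv g \<otimes> \<alpha> g"
  have zQ: "z [^] k \<in> Q" for k :: nat
    using subgroup_int_pow_closed[OF subgroup_Q inv_mult_image_mem_Q[OF \<alpha> fixes_Q g], of "int k"]
    by (simp add: z_def int_pow_int)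
  have pow: "\<alpha> [^]\<^bsub>AutFgrp F (carrier S)\<^esub> k \<in> F (carrier S) (carrier S)"
    using A.nat_pow_closed \<alpha> by simp
  have "\<alpha> [^]\<^bsub>AutFgrp F (carrier S)\<^esub> Suc k = compose (carrier S) \<alpha> (\<alpha> [^]\<^bsub>AutFgrp F (carrier S)\<^esub> k)"
    by (subst A.nat_pow_Suc2) (use \<alpha> mult_AutFgrp[OF \<alpha> pow] in simp_all)
  then have "(\<alpha> [^]\<^bsub>AutFgrp F (carrier S)\<^esub> Suc k) g = \<alpha> (g \<otimes> z [^] k)"
    using g Suc by (simp add: compose_def z_def)
  also have "\<dots> = \<alpha> g \<otimes> z [^] k"
    using mor_mult[OF \<alpha> g Q_carrier[OF zQ]] fixes_Q[OF zQ] by simp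
  also have "\<dots> = g \<otimes> z \<otimes> z [^] k"
    using g mor_closed[OF \<alpha> g] by (simp add: z_def m_assoc[symmetric])
  also have "\<dots> = g \<otimes> z [^] Suc k"
    using g mor_closed[OF \<alpha> g] unfolding z_def
    by (simp only: nat_pow_Suc2 m_assoc m_closed inv_closed nat_pow_closed)
  finally show ?case by (simp add: z_def)
qed

lemma aut_fixing_Q_inner:
  assumes \<alpha>: "\<alpha> \<in> F (carrier S) (carrier S)" and fixes_Q: "\<And>x. x \<in> Q \<Longrightarrow> \<alpha> x = x"
  shows "\<alpha> \<in> AutX S (carrier S) (carrier S)"
proof -
  interpret A: group "AutFgrp F (carrier S)" by (rule group_AutFgrp[OF subgroup_self])
  obtain n where n: "card (carrier S) = p ^ n" using p_group by blast
  have pow: "\<alpha> [^]\<^bsub>AutFgrp F (carrier S)\<^esub> (p ^ n) \<in> F (carrier S) (carrier S)"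
    using A.nat_pow_closed \<alpha> by simp
  have "\<alpha> [^]\<^bsub>AutFgrp F (carrier S)\<^esub> (p ^ n) = \<one>\<^bsub>AutFgrp F (carrier S)\<^esub>"
    unfolding one_AutFgrp
  proof (rule extensionalityI[OF mor_extensional[OF pow]])
    fix g assume g: "g \<in> carrier S"
    have "(inv g \<otimes> \<alpha> g) [^] (p ^ n) = \<one>"
      using pow_order_eq_1 g mor_closed[OF \<alpha> g] n by (simp add: order_def)
    then show "(\<alpha> [^]\<^bsub>AutFgrp F (carrier S)\<^esub> (p ^ n)) g = (\<lambda>x\<in>carrier S. x) g"
      using aut_fixing_Q_pow[OF \<alpha> fixes_Q g] g by simp
  qed simp
  then show ?thesis using aut_of_p_power_order_inner[OF \<alpha>] by blast
qed

lemma aut_fixing_Q_eq_conjm_centre: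
  assumes \<alpha>: "\<alpha> \<in> F (carrier S) (carrier S)" and fixes_Q: "\<And>x. x \<in> Q \<Longrightarrow> \<alpha> x = x"
  shows "\<exists>z \<in> ZZ S Q. \<alpha> = conjm S z (carrier S)"
proof -
  obtain s where s: "s \<in> carrier S" "\<alpha> = conjm S s (carrier S)"
    using aut_fixing_Q_inner[OF assms] unfolding AutX_def by blast
  have "s \<otimes> x = x \<otimes> s" if x: "x \<in> Q" for x
    using fixes_Q[OF x] s conj_eq_iff_mult_eq Q_carrier[OF x] by (simp add: conjm_def)
  then have "s \<in> CS S Q" unfolding CS_def using s(1) by blast
  then show ?thesis using self_centralizing s(2) by blast
qed

lemma kernel_restrict:
  "kernel (AutFgrp F (carrier S)) (AutFgrp F Q) (\<lambda>\<alpha>. restrict \<alpha> Q) = AutX S (ZZ S Q) (carrier S)"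
proof (intro equalityI subsetI)
  fix \<alpha> assume "\<alpha> \<in> kernel (AutFgrp F (carrier S)) (AutFgrp F Q) (\<lambda>\<alpha>. restrict \<alpha> Q)"
  then have \<alpha>: "\<alpha> \<in> F (carrier S) (carrier S)" and "restrict \<alpha> Q = (\<lambda>x\<in>Q. x)"
    by (auto simp: kernel_def one_AutFgrp)
  then have "\<And>x. x \<in> Q \<Longrightarrow> \<alpha> x = x" by (metis restrict_apply')
  then show "\<alpha> \<in> AutX S (ZZ S Q) (carrier S)"
    using aut_fixing_Q_eq_conjm_centre[OF \<alpha>] unfolding AutX_def by blast
next
  fix \<alpha> assume "\<alpha> \<in> AutX S (ZZ S Q) (carrier S)"
  then obtain z where z: "z \<in> ZZ S Q" "\<alpha> = conjm S z (carrier S)" unfolding AutX_def by blast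
  have zS: "z \<in> carrier S" using z(1) Q_carrier unfolding ZZ_def by blast
  have "restrict \<alpha> Q = (\<lambda>x\<in>Q. x)"
    unfolding z(2) restrict_conjm[OF zS] conjm_def
    by (rule restrict_ext) (use z(1) zS Q_carrier in \<open>auto simp: ZZ_def m_assoc\<close>)
  then show "\<alpha> \<in> kernel (AutFgrp F (carrier S)) (AutFgrp F Q) (\<lambda>\<alpha>. restrict \<alpha> Q)"
    using inner_aut[OF zS] z(2) by (simp add: kernel_def one_AutFgrp)
qed

lemma group_hom_Out_restrict:
  "group_hom (AutFgrp F (carrier S)) (OutFgrp S F Q) (\<lambda>\<alpha>. AutX S Q Q #>\<^bsub>AutFgrp F Q\<^esub> restrict \<alpha> Q)"
  using group_hom_compose[OF group_hom_restrict normal.group_hom_r_coset_Mod[OF normal_Inn[OF subgroup_Q]]]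
  unfolding OutFgrp_def by (simp add: comp_def)

lemma kernel_Out_restrict:
  "kernel (AutFgrp F (carrier S)) (OutFgrp S F Q) (\<lambda>\<alpha>. AutX S Q Q #>\<^bsub>AutFgrp F Q\<^esub> restrict \<alpha> Q)
    = AutX S Q (carrier S)"
proof -
  interpret \<rho>: group_hom "AutFgrp F (carrier S)" "AutFgrp F Q" "\<lambda>\<alpha>. restrict \<alpha> Q"
    by (rule group_hom_restrict)
  interpret Inn: normal "AutX S Q Q" "AutFgrp F Q" by (rule normal_Inn[OF subgroup_Q])
  have AutQ: "subgroup (AutX S Q (carrier S)) (AutFgrp F (carrier S))"
    using subgroup_AutX[OF subgroup_Q subgroup_self] Q_carrier by blast
  have "kernel (AutFgrp F (carrier S)) (AutFgrp F Q) (\<lambda>\<alpha>. restrict \<alpha> Q) \<subseteq> AutX S Q (carrier S)"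
    unfolding kernel_restrict AutX_def ZZ_def by blast
  then have "\<alpha> \<in> AutX S Q (carrier S) \<longleftrightarrow> restrict \<alpha> Q \<in> AutX S Q Q"
    if "\<alpha> \<in> F (carrier S) (carrier S)" for \<alpha>
    using \<rho>.mem_of_image_mem[OF AutQ] restrict_AutX[of Q] Q_carrier that by auto
  moreover have "restrict \<alpha> Q \<in> AutX S Q Q \<longleftrightarrow> AutX S Q Q #>\<^bsub>AutFgrp F Q\<^esub> restrict \<alpha> Q = AutX S Q Q"
    if "\<alpha> \<in> F (carrier S) (carrier S)" for \<alpha>
    using Inn.kernel_r_coset_Mod restrict_aut[OF that] by (auto simp: kernel_def FactGroup_def)
  moreover have "AutX S Q (carrier S) \<subseteq> F (carrier S) (carrier S)"
    using subgroup.subset[OF AutQ] by simp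
  ultimately show ?thesis by (auto simp: kernel_def OutFgrp_def FactGroup_def)
qed

lemma image_Out_restrict:
  "(\<lambda>\<alpha>. AutX S Q Q #>\<^bsub>AutFgrp F Q\<^esub> restrict \<alpha> Q) ` F (carrier S) (carrier S)
    = normalizer (OutFgrp S F Q) (OutS S F Q)"
proof -
  interpret Inn: normal "AutX S Q Q" "AutFgrp F Q" by (rule normal_Inn[OF subgroup_Q])
  interpret \<pi>: group_hom "AutFgrp F Q" "AutFgrp F Q Mod AutX S Q Q" "\<lambda>a. AutX S Q Q #>\<^bsub>AutFgrp F Q\<^esub> a"
    by (rule Inn.group_hom_r_coset_Mod)
  have "AutX S Q Q \<subseteq> AutX S (carrier S) Q" using Q_carrier unfolding AutX_def by blast
  then have "normalizer (OutFgrp S F Q) (OutS S F Q)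
      = (\<lambda>a. AutX S Q Q #>\<^bsub>AutFgrp F Q\<^esub> a) ` normalizer (AutFgrp F Q) (AutX S (carrier S) Q)"
    using \<pi>.normalizer_image_eq[OF subgroup_AutS_Q _ Inn.image_r_coset_Mod] Inn.kernel_r_coset_Mod
    unfolding OutFgrp_def OutS_def by simp
  then show ?thesis by (simp add: image_restrict[symmetric] image_image)
qed

end

theorem lemma2p2:
  fixes S :: "'a monoid" and p :: nat and Q :: "'a set"
    and F :: "'a set \<Rightarrow> 'a set \<Rightarrow> ('a \<Rightarrow> 'a) set"
  assumes "group S" and "finite (carrier S)" and "Factorial_Ring.prime p"
    and "\<exists>n. card (carrier S) = p ^ n"
    and "subgroup Q S"
    and "\<forall>\<alpha> \<in> auto S. \<alpha> ` Q = Q"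
    and "CS S Q = ZZ S Q"
    and "saturated p S F"
  shows "((\<lambda>C. the_elem ((\<lambda>\<alpha>. restrict \<alpha> Q) ` C))
           \<in> iso (AutFgrp F (carrier S) Mod AutX S (ZZ S Q) (carrier S))
                 ((AutFgrp F Q)\<lparr>carrier := normalizer (AutFgrp F Q) (AutX S (carrier S) Q)\<rparr>)
       \<and> (\<lambda>C. the_elem ((\<lambda>\<alpha>. AutX S Q Q #>\<^bsub>AutFgrp F Q\<^esub> restrict \<alpha> Q) ` C))
           \<in> iso (AutFgrp F (carrier S) Mod AutX S Q (carrier S))
                 ((OutFgrp S F Q)\<lparr>carrier := normalizer (OutFgrp S F Q) (OutS S F Q)\<rparr>))"
proof -
  have fusion: "fusion_system S F" using assms(8) unfolding saturated_def by blast
  interpret char_self_centralizing S F p Q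
    by (intro char_self_centralizing.intro saturated_fusion_system.intro finite_fusion_system.intro
        char_self_centralizing_axioms.intro saturated_fusion_system_axioms.intro)
      (rule assms fusion)+
  show ?thesis
    using group_hom.FactGroup_iso_image[OF group_hom_restrict]
      group_hom.FactGroup_iso_image[OF group_hom_Out_restrict]
    unfolding carrier_AutFgrp kernel_restrict image_restrict kernel_Out_restrict image_Out_restrict
    by (rule conjI)
qed

end
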